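(* Let $\Lambda$ be a real interval, let $w_i\ge0$ with $\sum_iw_i=1$, and let $\psi$ be the weighted-proportional-cumulative with weights $\mathbf w$. Let $p_1,\dots,p_n\in\mathcal P$ have continuous CDFs $P_1,\dots,P_n$ with densities (also denoted $p_i$) and suppose $P_1\ge P_2\ge\dots\ge P_n$ pointwise. Writing $W_i=\sum_{k\le i}w_k$ ($W_0=0$), the output $\psi(\mathbf p)$ has density given (almost everywhere) by $$\psi(\mathbf p)(a)=\begin{cases}p_i(a)&\text{if }W_{i-1}\le P_i(a)<W_i\text{ for some }i\in N,\\ 0&\text{otherwise.}\end{cases}$$
   Context: $N=\{1,\dots,n\}$; $\mathcal P$ the Borel probability measures on $\Lambda$, $\mathcal C$ the CDFs, $\pi(p)(a)=p(\{x\in\Lambda:x\le a\})$. The weighted-proportional-cumulative with weights $\mathbf w$ is the PAF $\psi:\mathcal P^N\to\mathcal P$ whose associated CAF $\Psi$ (defined by $\Psi(\pi(p_1),\dots,\pi(p_n))=\pi(\psi(p_1,\dots,p_n))$) is $\Psi(\mathbf P)(a)=\mu_{\mathbf w}(P_1(a),\dots,P_n(a))$, where $\mu_{\mathbf w}(\mathbf r)=\sup\{y\in[0,1]:\sum_{i:\,r_i\ge y}w_i\ge y\}$. *)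

theory Defs
  imports "HOL-Probability.Probability"
begin

text \<open>Probability measures on the real interval Lambda are represented as probability
  measures on the Borel sets of the reals that are concentrated on Lambda.\<close>

definition prob_on :: "real set \<Rightarrow> real measure \<Rightarrow> bool" where
  "prob_on \<Lambda> p \<longleftrightarrow> prob_space p \<and> sets p = sets borel \<and> emeasure p (UNIV - \<Lambda>) = 0"

definition cdf_on :: "real set \<Rightarrow> real measure \<Rightarrow> real \<Rightarrow> real" where
  "cdf_on \<Lambda> p a = measure p {x \<in> \<Lambda>. x \<le> a}"

definition mu_w :: "nat \<Rightarrow> (nat \<Rightarrow> real) \<Rightarrow> (nat \<Rightarrow> real) \<Rightarrow> real" where
  "mu_w n w r = Sup {y \<in> {0..1}. (\<Sum>i\<in>{i\<in>{1..n}. r i \<ge> y}. w i) \<ge> y}"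

definition wpc :: "real set \<Rightarrow> nat \<Rightarrow> (nat \<Rightarrow> real) \<Rightarrow> (nat \<Rightarrow> real measure) \<Rightarrow> real measure" where
  "wpc \<Lambda> n w ps = (THE q. prob_on \<Lambda> q \<and>
      (\<forall>a\<in>\<Lambda>. cdf_on \<Lambda> q a = mu_w n w (\<lambda>i. cdf_on \<Lambda> (ps i) a)))"

end

theory Submission
  imports Defs
begin

(* If p has a continuous CDF F, then F is uniformly distributed under p, so for 0 \<le> c \<le> d \<le> 1 the
  mass p puts on {x \<le> a. c \<le> F x < d} is (F(a) clamped to [c, d]) - c.  Restricting each p_i to
  its band W_(i-1) \<le> P_i < W_i and adding up therefore gives a probability measure whose CDF at a
  is the sum over i of (P_i(a) clamped to [W_(i-1), W_i]) - W_(i-1).  When P_1(a) \<ge> ... \<ge> P_n(a),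
  both this sum and mu_w(P_1(a), ..., P_n(a)) equal max_k min(W_k, P_k(a)) (with W_0 = 0), so the
  measure is psi(p).  Monotonicity in i also makes the bands disjoint, hence its density is p_i on
  the i-th band and 0 off all bands. *)

lemma (in real_distribution) prob_lessThan_eq_cdf:
  assumes "prob {t} = 0"
  shows "prob {..<t} = cdf M t"
proof -
  have "cdf M t = prob ({..<t} \<union> {t})"
    unfolding cdf_def2 ivl_disj_un_singleton(2) ..
  also have "\<dots> = prob {..<t} + prob {t}"
    by (rule finite_measure_Union) auto
  finally have "cdf M t = prob {..<t} + prob {t}" .
  with assms show ?thesis by simp
qed

lemma (in real_distribution) cdf_sublevel_eq_lessThan:
  assumes atomless: "\<And>x. prob {x} = 0" and "0 < u" and "\<exists>x. u \<le> cdf M x"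
  obtains t where "{x. cdf M x < u} = {..<t}" and "cdf M t = u"
proof -
  define T where "T = {x. u \<le> cdf M x}"
  have "closed T"
    unfolding T_def using atomless
    by (intro closed_Collect_le continuous_at_imp_continuous_on) (auto simp: isCont_cdf)
  moreover have "T \<noteq> {}" using assms(3) by (auto simp: T_def)
  moreover have "bdd_below T"
  proof -
    have "eventually (\<lambda>x. cdf M x < u) at_bot"
      using order_tendstoD(2)[OF cdf_lim_at_bot \<open>0 < u\<close>] .
    then obtain N where N: "\<And>x. x \<le> N \<Longrightarrow> cdf M x < u"
      by (auto simp: eventually_at_bot_linorder)
    have "N \<le> x" if "x \<in> T" for x
      using that N[of x] by (force simp: T_def)
    then show ?thesis by (rule bdd_belowI)
  qed
  ultimately have tT: "Inf T \<in> T" by (intro closed_contains_Inf)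
  have sublevel: "{x. cdf M x < u} = {..<Inf T}"
  proof safe
    fix x assume "cdf M x < u"
    show "x < Inf T"
    proof (rule ccontr)
      assume "\<not> x < Inf T"
      then have "cdf M (Inf T) \<le> cdf M x" by (simp add: cdf_nondecreasing)
      with tT \<open>cdf M x < u\<close> show False by (simp add: T_def)
    qed
  next
    fix x assume "x < Inf T"
    then have "x \<notin> T" using cInf_lower[OF _ \<open>bdd_below T\<close>] by fastforce
    then show "cdf M x < u" by (simp add: T_def)
  qed
  have below: "cdf M x \<le> u" if "x < Inf T" for x
  proof -
    have "x \<in> {x. cdf M x < u}" unfolding sublevel using that by simp
    then show ?thesis by simp
  qed
  have "prob {..<Inf T} \<le> u"
  proof (rule tendsto_upperbound[OF cdf_at_left])
    show "\<forall>\<^sub>F x in at_left (Inf T). cdf M x \<le> u"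
      by (rule eventually_mono[OF eventually_at_left_real[of "Inf T - 1"]]) (simp_all add: below)
  qed (simp add: trivial_limit_at_left_real)
  then have "cdf M (Inf T) = u"
    using tT atomless by (simp add: T_def prob_lessThan_eq_cdf)
  with sublevel that show ?thesis by blast
qed

lemma (in real_distribution) borel_measurable_cdf: "cdf M \<in> borel_measurable borel"
  by (intro borel_measurable_mono) (simp add: mono_def cdf_nondecreasing)

lemma (in real_distribution) prob_cdf_less:
  assumes atomless: "\<And>x. prob {x} = 0"
  shows "prob {x. cdf M x < u} = max 0 (min 1 u)"
proof -
  consider "u \<le> 0" | "0 < u" "\<exists>x. u \<le> cdf M x" | "\<forall>x. cdf M x < u"
    by (meson not_le)
  then show ?thesis
  proof cases
    case 1
    then have "\<not> cdf M x < u" for x using cdf_nonneg[of x] by linarith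
    then have "{x. cdf M x < u} = {}" by simp
    then show ?thesis using 1 by simp
  next
    case 2
    then obtain t where "{x. cdf M x < u} = {..<t}" "cdf M t = u"
      using cdf_sublevel_eq_lessThan[OF atomless] by blast
    moreover have "u \<le> 1" using 2 cdf_bounded_prob order.trans by blast
    ultimately show ?thesis using 2 atomless by (simp add: prob_lessThan_eq_cdf)
  next
    case 3
    then have "1 \<le> u"
      by (intro tendsto_upperbound[OF cdf_lim_at_top_prob]) (auto simp: less_imp_le)
    moreover have "{x. cdf M x < u} = space M" using 3 by simp
    ultimately show ?thesis using prob_space by simp
  qed
qed

lemma (in real_distribution) prob_atMost_cdf_less:
  assumes atomless: "\<And>x. prob {x} = 0"
  shows "prob ({..a} \<inter> {x. cdf M x < u}) = min (cdf M a) (max 0 (min 1 u))"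
proof (cases "cdf M a < u")
  case True
  then have "cdf M x < u" if "x \<le> a" for x using cdf_nondecreasing[OF that] by linarith
  then have "{..a} \<inter> {x. cdf M x < u} = {..a}" by auto
  then show ?thesis using True cdf_nonneg[of a] cdf_bounded_prob[of a] by (simp add: cdf_def2[symmetric])
next
  case False
  then have "x \<le> a" if "cdf M x < u" for x
    using that cdf_nondecreasing[of a x] by (cases "x \<le> a") auto
  then have "{..a} \<inter> {x. cdf M x < u} = {x. cdf M x < u}" by auto
  then show ?thesis
    using False cdf_nonneg[of a] cdf_bounded_prob[of a] by (simp add: prob_cdf_less[OF atomless])
qed

lemma (in real_distribution) prob_cdf_band:
  assumes atomless: "\<And>x. prob {x} = 0" and "0 \<le> c" "c \<le> d" "d \<le> 1"
  shows "prob {x. c \<le> cdf M x \<and> cdf M x < d} = d - c"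
    and "prob ({..a} \<inter> {x. c \<le> cdf M x \<and> cdf M x < d}) = min (max (cdf M a) c) d - c"
proof -
  note [measurable] = borel_measurable_cdf
  have band: "A \<inter> {x. c \<le> cdf M x \<and> cdf M x < d} = (A \<inter> {x. cdf M x < d}) - (A \<inter> {x. cdf M x < c})"
    for A by auto
  have diff: "prob (A \<inter> {x. c \<le> cdf M x \<and> cdf M x < d}) =
      prob (A \<inter> {x. cdf M x < d}) - prob (A \<inter> {x. cdf M x < c})" if [measurable]: "A \<in> sets borel" for A
    unfolding band by (rule finite_measure_Diff) (use \<open>c \<le> d\<close> in auto)
  show "prob {x. c \<le> cdf M x \<and> cdf M x < d} = d - c"
    using diff[of UNIV] prob_cdf_less[OF atomless, of c] prob_cdf_less[OF atomless, of d] assms(2-4)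
    by simp
  have "min (cdf M a) d - min (cdf M a) c = min (max (cdf M a) c) d - c"
    using assms(2,3) cdf_nonneg[of a] by linarith
  then show "prob ({..a} \<inter> {x. c \<le> cdf M x \<and> cdf M x < d}) = min (max (cdf M a) c) d - c"
    using diff[of "{..a}"] prob_atMost_cdf_less[OF atomless, of a c] prob_atMost_cdf_less[OF atomless, of a d]
      assms(2-4) by simp
qed

lemma mu_w_cong:
  assumes "\<And>i. i \<in> {1..n} \<Longrightarrow> r i = r' i"
  shows "mu_w n w r = mu_w n w r'"
proof -
  have "{i\<in>{1..n}. y \<le> r i} = {i\<in>{1..n}. y \<le> r' i}" for y using assms by auto
  then show ?thesis unfolding mu_w_def by simp
qed

lemma le_Max_min_partial_sums:
  fixes w r :: "nat \<Rightarrow> real"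
  assumes w0: "\<And>i. i \<in> {1..n} \<Longrightarrow> 0 \<le> w i" and y: "y \<le> (\<Sum>i\<in>{i\<in>{1..n}. y \<le> r i}. w i)"
  shows "y \<le> Max (insert 0 ((\<lambda>k. min (\<Sum>i\<in>{1..k}. w i) (r k)) ` {1..n}))"
    (is "_ \<le> Max ?S")
proof (cases "y \<le> 0")
  case True
  then show ?thesis by (simp add: Max_ge_iff)
next
  case False
  define K where "K = {i\<in>{1..n}. y \<le> r i}"
  have yK: "y \<le> sum w K" unfolding K_def by (rule y)
  then have "K \<noteq> {}" using False by auto
  moreover have "finite K" by (simp add: K_def)
  ultimately have "Max K \<in> K" "\<And>i. i \<in> K \<Longrightarrow> i \<le> Max K" by simp_all
  then have k: "Max K \<in> K" "K \<subseteq> {1..Max K}" by (auto simp: K_def)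
  have "Max K \<le> n" using k(1) by (simp add: K_def)
  then have "sum w K \<le> (\<Sum>i\<in>{1..Max K}. w i)"
    using k(2) w0 by (intro sum_mono2) auto
  then have "y \<le> (\<Sum>i\<in>{1..Max K}. w i)" using yK by linarith
  moreover have "y \<le> r (Max K)" using k by (simp add: K_def)
  moreover have "min (\<Sum>i\<in>{1..Max K}. w i) (r (Max K)) \<le> Max ?S"
    using k by (intro Max_ge) (auto simp: K_def)
  ultimately show ?thesis by linarith
qed

lemma mu_w_antimono_eq_Max:
  fixes w r :: "nat \<Rightarrow> real"
  assumes w0: "\<And>i. i \<in> {1..n} \<Longrightarrow> 0 \<le> w i" and w1: "(\<Sum>i\<in>{1..n}. w i) \<le> 1"
    and antimono: "\<And>i j. i \<in> {1..n} \<Longrightarrow> j \<in> {1..n} \<Longrightarrow> i \<le> j \<Longrightarrow> r j \<le> r i"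
  shows "mu_w n w r = Max (insert 0 ((\<lambda>k. min (\<Sum>i\<in>{1..k}. w i) (r k)) ` {1..n}))"
    (is "_ = Max ?S")
proof -
  define G where "G y = (\<Sum>i\<in>{i\<in>{1..n}. y \<le> r i}. w i)" for y
  have "Max ?S \<in> {y \<in> {0..1}. y \<le> G y}"
  proof -
    have "Max ?S \<in> ?S" by (intro Max_in) auto
    then consider "Max ?S = 0" | k where "k \<in> {1..n}" "Max ?S = min (\<Sum>i\<in>{1..k}. w i) (r k)" by blast
    then show ?thesis
    proof cases
      case 1
      then show ?thesis using w0 by (auto simp: G_def intro: sum_nonneg)
    next
      case 2
      have "{1..k} \<subseteq> {i\<in>{1..n}. Max ?S \<le> r i}" using 2 antimono[of _ k] by force
      then have "(\<Sum>i\<in>{1..k}. w i) \<le> G (Max ?S)"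
        unfolding G_def using w0 by (intro sum_mono2) auto
      moreover have "(\<Sum>i\<in>{1..k}. w i) \<le> (\<Sum>i\<in>{1..n}. w i)" using 2 w0 by (intro sum_mono2) auto
      moreover have "0 \<le> Max ?S" by (simp add: Max_ge_iff)
      ultimately show ?thesis using 2 w1 by auto
    qed
  qed
  moreover have "y \<le> Max ?S" if "y \<in> {y \<in> {0..1}. y \<le> G y}" for y
    using le_Max_min_partial_sums[of n w y r] that w0 by (simp add: G_def)
  ultimately show ?thesis unfolding mu_w_def G_def by (intro cSup_eq_maximum) auto
qed

lemma sum_clamp_partial_sums_eq_Max:
  fixes w r :: "nat \<Rightarrow> real"
  assumes "\<And>i. i \<in> {1..n} \<Longrightarrow> 0 \<le> w i"
    and "\<And>i j. i \<in> {1..n} \<Longrightarrow> j \<in> {1..n} \<Longrightarrow> i \<le> j \<Longrightarrow> r j \<le> r i"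
  shows "(\<Sum>i\<in>{1..n}. min (max (r i) (\<Sum>k\<in>{1..<i}. w k)) (\<Sum>k\<in>{1..i}. w k) - (\<Sum>k\<in>{1..<i}. w k))
    = Max (insert 0 ((\<lambda>k. min (\<Sum>i\<in>{1..k}. w i) (r k)) ` {1..n}))"
  using assms
proof (induction n)
  case 0
  then show ?case by simp
next
  case (Suc n)
  define W where "W k = (\<Sum>i\<in>{1..k}. w i)" for k
  define M where "M = Max (insert 0 ((\<lambda>k. min (W k) (r k)) ` {1..n}))"
  have W_mono: "W k \<le> W n" if "k \<le> n" for k
    unfolding W_def using that Suc.prems(1) by (intro sum_mono2) auto
  have "0 \<le> W n" unfolding W_def using Suc.prems(1) by (intro sum_nonneg) auto
  then have "M \<le> W n"
    unfolding M_def using W_mono by (auto intro: min.coboundedI1)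
  moreover have "min (W n) (r (Suc n)) \<le> M"
  proof (cases "n = 0")
    case False
    then have "min (W n) (r (Suc n)) \<le> min (W n) (r n)" using Suc.prems(2)[of n "Suc n"] by simp
    also have "\<dots> \<le> M" unfolding M_def using False by (intro Max_ge) auto
    finally show ?thesis .
  qed (simp add: M_def W_def)
  moreover have "W n \<le> W (Suc n)" using Suc.prems(1)[of "Suc n"] by (simp add: W_def)
  ultimately have step: "M + (min (max (r (Suc n)) (W n)) (W (Suc n)) - W n) = max M (min (W (Suc n)) (r (Suc n)))"
    by linarith
  have "(\<Sum>i\<in>{1..Suc n}. min (max (r i) (\<Sum>k\<in>{1..<i}. w k)) (W i) - (\<Sum>k\<in>{1..<i}. w k))
      = M + (min (max (r (Suc n)) (W n)) (W (Suc n)) - W n)"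
    using Suc by (simp add: M_def W_def atLeastLessThanSuc_atLeastAtMost)
  also have "\<dots> = Max (insert (min (W (Suc n)) (r (Suc n))) (insert 0 ((\<lambda>k. min (W k) (r k)) ` {1..n})))"
    by (subst step) (simp add: M_def max.commute)
  also have "insert (min (W (Suc n)) (r (Suc n))) (insert 0 ((\<lambda>k. min (W k) (r k)) ` {1..n}))
      = insert 0 ((\<lambda>k. min (W k) (r k)) ` {1..Suc n})"
    by (auto simp: atLeastAtMostSuc_conv)
  finally show ?case by (simp only: W_def)
qed

lemma mu_w_antimono_eq_sum_clamp:
  fixes w r :: "nat \<Rightarrow> real"
  assumes "\<And>i. i \<in> {1..n} \<Longrightarrow> 0 \<le> w i" and "(\<Sum>i\<in>{1..n}. w i) \<le> 1"
    and "\<And>i j. i \<in> {1..n} \<Longrightarrow> j \<in> {1..n} \<Longrightarrow> i \<le> j \<Longrightarrow> r j \<le> r i"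
  shows "mu_w n w r
    = (\<Sum>i\<in>{1..n}. min (max (r i) (\<Sum>k\<in>{1..<i}. w k)) (\<Sum>k\<in>{1..i}. w k) - (\<Sum>k\<in>{1..<i}. w k))"
  using mu_w_antimono_eq_Max[of n w r] sum_clamp_partial_sums_eq_Max[of n w r] assms by simp

lemma partial_sum_bounds:
  fixes w :: "nat \<Rightarrow> real"
  assumes "\<And>i. i \<in> {1..n} \<Longrightarrow> 0 \<le> w i" "(\<Sum>i\<in>{1..n}. w i) = 1" "i \<in> {1..n}"
  shows "0 \<le> (\<Sum>k\<in>{1..<i}. w k)" "(\<Sum>k\<in>{1..<i}. w k) \<le> (\<Sum>k\<in>{1..i}. w k)"
    "(\<Sum>k\<in>{1..i}. w k) \<le> 1" "(\<Sum>k\<in>{1..i}. w k) - (\<Sum>k\<in>{1..<i}. w k) = w i"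
proof -
  have sum_mono: "sum w A \<le> sum w B" if "A \<subseteq> B" "B \<subseteq> {1..n}" for A B
    using that assms(1) by (intro sum_mono2) (auto intro: finite_subset)
  show "0 \<le> (\<Sum>k\<in>{1..<i}. w k)" using assms by (intro sum_nonneg) auto
  show "(\<Sum>k\<in>{1..<i}. w k) \<le> (\<Sum>k\<in>{1..i}. w k)" using assms(3) by (intro sum_mono) auto
  show "(\<Sum>k\<in>{1..i}. w k) \<le> 1" using assms(2,3) sum_mono[of "{1..i}" "{1..n}"] by auto
  show "(\<Sum>k\<in>{1..i}. w k) - (\<Sum>k\<in>{1..<i}. w k) = w i"
    using assms(3) by (simp add: atLeastLessThanSuc_atLeastAtMost[symmetric])
qed

lemma (in real_distribution) prob_partial_sum_band:
  fixes w :: "nat \<Rightarrow> real"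
  assumes atomless: "\<And>x. prob {x} = 0"
    and "\<And>i. i \<in> {1..n} \<Longrightarrow> 0 \<le> w i" "(\<Sum>i\<in>{1..n}. w i) = 1" "i \<in> {1..n}"
  defines "band \<equiv> {x. (\<Sum>k\<in>{1..<i}. w k) \<le> cdf M x \<and> cdf M x < (\<Sum>k\<in>{1..i}. w k)}"
  shows "prob band = w i"
    and "prob ({..a} \<inter> band) = min (max (cdf M a) (\<Sum>k\<in>{1..<i}. w k)) (\<Sum>k\<in>{1..i}. w k) - (\<Sum>k\<in>{1..<i}. w k)"
proof -
  have W: "0 \<le> (\<Sum>k\<in>{1..<i}. w k)" "(\<Sum>k\<in>{1..<i}. w k) \<le> (\<Sum>k\<in>{1..i}. w k)"
    "(\<Sum>k\<in>{1..i}. w k) \<le> 1" "(\<Sum>k\<in>{1..i}. w k) - (\<Sum>k\<in>{1..<i}. w k) = w i"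
    using partial_sum_bounds[of n w i] assms(2-4) by auto
  show "prob band = w i"
    unfolding band_def using prob_cdf_band(1)[OF atomless W(1-3)] W(4) by simp
  show "prob ({..a} \<inter> band) = min (max (cdf M a) (\<Sum>k\<in>{1..<i}. w k)) (\<Sum>k\<in>{1..i}. w k) - (\<Sum>k\<in>{1..<i}. w k)"
    unfolding band_def using prob_cdf_band(2)[OF atomless W(1-3)] .
qed

lemma partial_sum_bands_disjoint:
  fixes w F :: "nat \<Rightarrow> real"
  assumes w0: "\<And>i. i \<in> {1..n} \<Longrightarrow> 0 \<le> w i"
    and antimono: "\<And>i j. i \<in> {1..n} \<Longrightarrow> j \<in> {1..n} \<Longrightarrow> i \<le> j \<Longrightarrow> F j \<le> F i"
    and "i \<in> {1..n}" "(\<Sum>k\<in>{1..<i}. w k) \<le> F i" "F i < (\<Sum>k\<in>{1..i}. w k)"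
    and "j \<in> {1..n}" "(\<Sum>k\<in>{1..<j}. w k) \<le> F j" "F j < (\<Sum>k\<in>{1..j}. w k)"
  shows "i = j"
proof -
  have False if "i \<in> {1..n}" "j \<in> {1..n}" "i < j"
    and "F i < (\<Sum>k\<in>{1..i}. w k)" "(\<Sum>k\<in>{1..<j}. w k) \<le> F j" for i j
  proof -
    have "(\<Sum>k\<in>{1..i}. w k) \<le> (\<Sum>k\<in>{1..<j}. w k)" using that w0 by (intro sum_mono2) auto
    then show False using that antimono[of i j] by linarith
  qed
  then show ?thesis using assms by (metis linorder_neqE_nat)
qed

lemma measure_density_lborel_singleton:
  assumes "f \<in> borel_measurable borel"
  shows "measure (density lborel f) {x} = 0"
proof -
  have "emeasure (density lborel f) {x} = (\<integral>\<^sup>+ y. f y * indicator {x} y \<partial>lborel)"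
    using assms by (simp add: emeasure_density)
  also have "\<dots> = 0"
    by (rule nn_integral_null_set) (simp add: finite_imp_null_set_lborel)
  finally show ?thesis by (simp add: measure_def)
qed

lemma emeasure_density_sum_indicator:
  fixes f :: "'i \<Rightarrow> 'a \<Rightarrow> real"
  assumes "finite I" and f: "\<And>i. i \<in> I \<Longrightarrow> f i \<in> borel_measurable M" "\<And>i x. i \<in> I \<Longrightarrow> 0 \<le> f i x"
    and S: "\<And>i. i \<in> I \<Longrightarrow> S i \<in> sets M" and A: "A \<in> sets M"
  shows "emeasure (density M (\<lambda>x. ennreal (\<Sum>i\<in>I. f i x * indicator (S i) x))) A
    = (\<Sum>i\<in>I. emeasure (density M (\<lambda>x. ennreal (f i x))) (A \<inter> S i))"
proof -
  have pointwise: "ennreal (\<Sum>i\<in>I. f i x * indicator (S i) x) * indicator A x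
      = (\<Sum>i\<in>I. ennreal (f i x) * indicator (A \<inter> S i) x)" for x
  proof -
    have "ennreal (\<Sum>i\<in>I. f i x * indicator (S i) x) = (\<Sum>i\<in>I. ennreal (f i x * indicator (S i) x))"
      using f(2) by (subst sum_ennreal) auto
    then show ?thesis by (auto simp: sum_distrib_right indicator_def intro!: sum.cong)
  qed
  have "(\<lambda>x. ennreal (\<Sum>i\<in>I. f i x * indicator (S i) x)) \<in> borel_measurable M"
    using f S by measurable
  then have "emeasure (density M (\<lambda>x. ennreal (\<Sum>i\<in>I. f i x * indicator (S i) x))) A
      = (\<integral>\<^sup>+ x. ennreal (\<Sum>i\<in>I. f i x * indicator (S i) x) * indicator A x \<partial>M)"
    using A by (rule emeasure_density)
  also have "\<dots> = (\<Sum>i\<in>I. \<integral>\<^sup>+ x. ennreal (f i x) * indicator (A \<inter> S i) x \<partial>M)"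
    unfolding pointwise using assms by (intro nn_integral_sum) auto
  also have "\<dots> = (\<Sum>i\<in>I. emeasure (density M (\<lambda>x. ennreal (f i x))) (A \<inter> S i))"
    using assms by (intro sum.cong) (auto simp: emeasure_density)
  finally show ?thesis .
qed

lemma sum_indicator_eq_THE:
  fixes g :: "'i \<Rightarrow> real"
  assumes "finite I" and disjoint: "\<And>i j. i \<in> I \<Longrightarrow> j \<in> I \<Longrightarrow> x \<in> S i \<Longrightarrow> x \<in> S j \<Longrightarrow> i = j"
  shows "(\<Sum>i\<in>I. g i * indicator (S i) x) = (if \<exists>i\<in>I. x \<in> S i then g (THE i. i \<in> I \<and> x \<in> S i) else 0)"
proof (cases "\<exists>i\<in>I. x \<in> S i")
  case True
  then obtain i where i: "i \<in> I" "x \<in> S i" by blast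
  then have "(THE i. i \<in> I \<and> x \<in> S i) = i" using disjoint by blast
  moreover have "(\<Sum>j\<in>I. g j * indicator (S j) x) = (\<Sum>j\<in>I. if j = i then g i else 0)"
    using i disjoint by (intro sum.cong) (auto simp: indicator_def)
  ultimately show ?thesis using True i \<open>finite I\<close> by simp
qed (auto simp: indicator_def)

lemma cdf_bands_density:
  fixes n :: nat and P :: "nat \<Rightarrow> real measure" and f :: "nat \<Rightarrow> real \<Rightarrow> real" and w :: "nat \<Rightarrow> real"
  defines "band i \<equiv> {x. (\<Sum>k\<in>{1..<i}. w k) \<le> cdf (P i) x \<and> cdf (P i) x < (\<Sum>k\<in>{1..i}. w k)}"
  defines "Q \<equiv> density lborel (\<lambda>x. ennreal (\<Sum>i\<in>{1..n}. f i x * indicator (band i) x))"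
  assumes w0: "\<And>i. i \<in> {1..n} \<Longrightarrow> 0 \<le> w i" and w1: "(\<Sum>i\<in>{1..n}. w i) = 1"
    and dist: "\<And>i. i \<in> {1..n} \<Longrightarrow> real_distribution (P i)"
    and f: "\<And>i. i \<in> {1..n} \<Longrightarrow> f i \<in> borel_measurable borel" "\<And>i x. i \<in> {1..n} \<Longrightarrow> 0 \<le> f i x"
    and P: "\<And>i. i \<in> {1..n} \<Longrightarrow> P i = density lborel (\<lambda>x. ennreal (f i x))"
    and antimono: "\<And>i j x. i \<in> {1..n} \<Longrightarrow> j \<in> {1..n} \<Longrightarrow> i \<le> j \<Longrightarrow> cdf (P j) x \<le> cdf (P i) x"
  shows "emeasure Q UNIV = 1"
    and "A \<in> sets borel \<Longrightarrow> (\<And>i. i \<in> {1..n} \<Longrightarrow> emeasure (P i) A = 0) \<Longrightarrow> emeasure Q A = 0"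
    and "measure Q {..a} = mu_w n w (\<lambda>i. cdf (P i) a)"
proof -
  have atomless: "measure (P i) {x} = 0" if "i \<in> {1..n}" for i x
    using P[OF that] f(1)[OF that] by (simp add: measure_density_lborel_singleton)
  have band_measurable: "band i \<in> sets borel" if "i \<in> {1..n}" for i
  proof -
    note [measurable] = real_distribution.borel_measurable_cdf[OF dist[OF that]]
    show ?thesis unfolding band_def by measurable
  qed
  have emeasure_Q: "emeasure Q A = (\<Sum>i\<in>{1..n}. emeasure (P i) (A \<inter> band i))"
    if "A \<in> sets borel" for A
    unfolding Q_def using that f band_measurable P by (subst emeasure_density_sum_indicator) auto
  have emeasure_P: "emeasure (P i) B = ennreal (measure (P i) B)" if "i \<in> {1..n}" for i B
    using dist[OF that] by (simp add: real_distribution_def prob_space_def finite_measure.emeasure_eq_measure)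
  have band_prob: "measure (P i) (band i) = w i"
      "measure (P i) ({..a} \<inter> band i)
        = min (max (cdf (P i) a) (\<Sum>k\<in>{1..<i}. w k)) (\<Sum>k\<in>{1..i}. w k) - (\<Sum>k\<in>{1..<i}. w k)"
    if "i \<in> {1..n}" for i a
    unfolding band_def
    using real_distribution.prob_partial_sum_band[OF dist[OF that], where n = n and w = w and i = i]
      atomless[OF that] w0 w1 that by auto
  have "emeasure Q UNIV = (\<Sum>i\<in>{1..n}. ennreal (w i))"
    unfolding emeasure_Q[OF sets.top[of borel, unfolded space_borel]]
    by (intro sum.cong) (simp_all add: emeasure_P band_prob)
  also have "\<dots> = 1" using w0 w1 by (subst sum_ennreal) auto
  finally show "emeasure Q UNIV = 1" .
  show "emeasure Q A = 0" if "A \<in> sets borel" "\<And>i. i \<in> {1..n} \<Longrightarrow> emeasure (P i) A = 0"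
    unfolding emeasure_Q[OF that(1)]
  proof (intro sum.neutral ballI)
    fix i assume "i \<in> {1..n}"
    then show "emeasure (P i) (A \<inter> band i) = 0"
      using emeasure_mono[of "A \<inter> band i" A "P i"] that by (simp add: P)
  qed
  define clamp where "clamp i = min (max (cdf (P i) a) (\<Sum>k\<in>{1..<i}. w k)) (\<Sum>k\<in>{1..i}. w k)
    - (\<Sum>k\<in>{1..<i}. w k)" for i
  have clamp_nonneg: "0 \<le> clamp i" if "i \<in> {1..n}" for i
    using partial_sum_bounds(2)[of n w i] w0 w1 that by (simp add: clamp_def)
  have "emeasure Q {..a} = (\<Sum>i\<in>{1..n}. ennreal (clamp i))"
    unfolding emeasure_Q[OF atMost_borel] by (intro sum.cong) (simp_all add: emeasure_P band_prob clamp_def)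
  also have "\<dots> = ennreal (\<Sum>i\<in>{1..n}. clamp i)"
    using clamp_nonneg by (rule sum_ennreal)
  finally have "measure Q {..a} = (\<Sum>i\<in>{1..n}. clamp i)"
    using sum_nonneg[of "{1..n}" clamp] clamp_nonneg by (simp add: measure_def)
  also have "\<dots> = mu_w n w (\<lambda>i. cdf (P i) a)"
    unfolding clamp_def using w0 w1 antimono by (intro mu_w_antimono_eq_sum_clamp[symmetric]) auto
  finally show "measure Q {..a} = mu_w n w (\<lambda>i. cdf (P i) a)" .
qed

lemma prob_on_real_distribution: "prob_on \<Lambda> q \<Longrightarrow> real_distribution q"
  unfolding prob_on_def by (simp add: real_distribution_def real_distribution_axioms_def)

lemma prob_on_measure_Int:
  assumes "prob_on \<Lambda> q" "\<Lambda> \<in> sets borel" "A \<in> sets borel"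
  shows "measure q (A \<inter> \<Lambda>) = measure q A"
proof -
  have "UNIV - \<Lambda> \<in> null_sets q" using assms unfolding prob_on_def by auto
  moreover have "A \<inter> \<Lambda> = A - (UNIV - \<Lambda>)" by auto
  ultimately show ?thesis using assms unfolding prob_on_def by (simp add: measure_Diff_null_set)
qed

lemma cdf_on_eq_cdf:
  assumes "prob_on \<Lambda> q" "\<Lambda> \<in> sets borel"
  shows "cdf_on \<Lambda> q = cdf q"
proof
  fix a
  have "{x \<in> \<Lambda>. x \<le> a} = {..a} \<inter> \<Lambda>" by auto
  then show "cdf_on \<Lambda> q a = cdf q a"
    unfolding cdf_on_def cdf_def using prob_on_measure_Int[OF assms, of "{..a}"] by simp
qed

lemma cdf_outside_interval:
  assumes "prob_on \<Lambda> q" "is_interval \<Lambda>" "a \<notin> \<Lambda>"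
  shows "cdf q a = (if \<forall>x\<in>\<Lambda>. a < x then 0 else 1)"
proof -
  have \<Lambda>: "\<Lambda> \<in> sets borel" using assms(2) by (rule real_interval_borel_measurable)
  show ?thesis
  proof (cases "\<forall>x\<in>\<Lambda>. a < x")
    case True
    then have "{..a} \<inter> \<Lambda> = {}" by (auto simp: not_le)
    then show ?thesis using True prob_on_measure_Int[OF assms(1) \<Lambda>, of "{..a}"] by (simp add: cdf_def)
  next
    case False
    then obtain x where "x \<in> \<Lambda>" "x \<le> a" by (auto simp: not_less)
    have "y \<le> a" if "y \<in> \<Lambda>" for y
    proof (rule ccontr)
      assume "\<not> y \<le> a"
      then have "a \<in> \<Lambda>"
        using is_interval_1[THEN iffD1, OF assms(2), rule_format, of x y a] \<open>x \<in> \<Lambda>\<close> \<open>x \<le> a\<close> that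
        by simp
      with assms(3) show False by simp
    qed
    then have "{..a} \<inter> \<Lambda> = UNIV \<inter> \<Lambda>" by auto
    then have "cdf q a = measure q (UNIV \<inter> \<Lambda>)"
      using prob_on_measure_Int[OF assms(1) \<Lambda>, of "{..a}"] by (simp add: cdf_def)
    also have "\<dots> = measure q UNIV"
      using prob_on_measure_Int[OF assms(1) \<Lambda>, of UNIV] by simp
    also have "\<dots> = 1"
      using real_distribution.space_eq_univ prob_space.prob_space prob_on_real_distribution[OF assms(1)]
      by (metis real_distribution_def)
    finally show ?thesis using False by simp
  qed
qed

lemma prob_on_eqI_cdf_on:
  assumes "prob_on \<Lambda> p" "prob_on \<Lambda> q" "is_interval \<Lambda>"
    and "\<And>a. a \<in> \<Lambda> \<Longrightarrow> cdf_on \<Lambda> p a = cdf_on \<Lambda> q a"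
  shows "p = q"
proof (rule cdf_unique[OF assms(1,2)[THEN prob_on_real_distribution]])
  have \<Lambda>: "\<Lambda> \<in> sets borel" using assms(3) by (rule real_interval_borel_measurable)
  show "cdf p = cdf q"
  proof
    fix a
    show "cdf p a = cdf q a"
    proof (cases "a \<in> \<Lambda>")
      case True
      then show ?thesis using assms(4)[of a] by (simp add: cdf_on_eq_cdf[OF assms(1) \<Lambda>] cdf_on_eq_cdf[OF assms(2) \<Lambda>])
    next
      case False
      then show ?thesis by (simp add: cdf_outside_interval[OF assms(1,3)] cdf_outside_interval[OF assms(2,3)])
    qed
  qed
qed

lemma wpc_eqI:
  assumes "is_interval \<Lambda>" "prob_on \<Lambda> q"
    and "\<And>a. a \<in> \<Lambda> \<Longrightarrow> cdf_on \<Lambda> q a = mu_w n w (\<lambda>i. cdf_on \<Lambda> (ps i) a)"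
  shows "wpc \<Lambda> n w ps = q"
  unfolding wpc_def
proof (rule the_equality)
  fix p assume "prob_on \<Lambda> p \<and> (\<forall>a\<in>\<Lambda>. cdf_on \<Lambda> p a = mu_w n w (\<lambda>i. cdf_on \<Lambda> (ps i) a))"
  then show "p = q" using assms by (intro prob_on_eqI_cdf_on[of \<Lambda>]) simp_all
qed (simp add: assms)

lemma cdf_on_le_imp_cdf_le:
  assumes "is_interval \<Lambda>" "prob_on \<Lambda> p" "prob_on \<Lambda> q"
    and "\<And>a. a \<in> \<Lambda> \<Longrightarrow> cdf_on \<Lambda> p a \<le> cdf_on \<Lambda> q a"
  shows "cdf p x \<le> cdf q x"
proof (cases "x \<in> \<Lambda>")
  case True
  have "\<Lambda> \<in> sets borel" using assms(1) by (rule real_interval_borel_measurable)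
  then show ?thesis using assms(4)[OF True] by (simp add: cdf_on_eq_cdf assms(2,3))
next
  case False
  then show ?thesis by (simp add: cdf_outside_interval[OF assms(2,1) False] cdf_outside_interval[OF assms(3,1) False])
qed

lemma wpc_eq_density_bands:
  fixes \<Lambda> :: "real set" and n :: nat and w :: "nat \<Rightarrow> real"
    and ps :: "nat \<Rightarrow> real measure" and f :: "nat \<Rightarrow> real \<Rightarrow> real"
  assumes \<Lambda>: "is_interval \<Lambda>"
    and w0: "\<And>i. i \<in> {1..n} \<Longrightarrow> 0 \<le> w i" and w1: "(\<Sum>i\<in>{1..n}. w i) = 1"
    and ps: "\<And>i. i \<in> {1..n} \<Longrightarrow> prob_on \<Lambda> (ps i)"
    and f: "\<And>i. i \<in> {1..n} \<Longrightarrow> f i \<in> borel_measurable borel" "\<And>i x. i \<in> {1..n} \<Longrightarrow> 0 \<le> f i x"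
    and density: "\<And>i. i \<in> {1..n} \<Longrightarrow> ps i = density lborel (\<lambda>x. ennreal (f i x))"
    and antimono: "\<And>i j x. i \<in> {1..n} \<Longrightarrow> j \<in> {1..n} \<Longrightarrow> i \<le> j \<Longrightarrow> cdf_on \<Lambda> (ps j) x \<le> cdf_on \<Lambda> (ps i) x"
  shows "wpc \<Lambda> n w ps = density lborel (\<lambda>x. ennreal (\<Sum>i\<in>{1..n}. f i x * indicator
      {x. (\<Sum>k\<in>{1..<i}. w k) \<le> cdf_on \<Lambda> (ps i) x \<and> cdf_on \<Lambda> (ps i) x < (\<Sum>k\<in>{1..i}. w k)} x))"
proof -
  have \<Lambda>_borel: "\<Lambda> \<in> sets borel" using \<Lambda> by (rule real_interval_borel_measurable)
  have cdf_on: "cdf_on \<Lambda> (ps i) = cdf (ps i)" if "i \<in> {1..n}" for i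
    using cdf_on_eq_cdf[OF ps[OF that] \<Lambda>_borel] .
  have antimono_cdf: "cdf (ps j) x \<le> cdf (ps i) x" if "i \<in> {1..n}" "j \<in> {1..n}" "i \<le> j" for i j x
    using antimono[OF that] by (simp add: cdf_on[OF that(1)] cdf_on[OF that(2)])
  have dist: "real_distribution (ps i)" if "i \<in> {1..n}" for i
    using ps[OF that] by (rule prob_on_real_distribution)
  define Q where "Q = density lborel (\<lambda>x. ennreal (\<Sum>i\<in>{1..n}. f i x * indicator
      {x. (\<Sum>k\<in>{1..<i}. w k) \<le> cdf (ps i) x \<and> cdf (ps i) x < (\<Sum>k\<in>{1..i}. w k)} x))"
  note bands = cdf_bands_density[where n = n and P = ps and w = w and f = f, folded Q_def]
  have "emeasure Q UNIV = 1"
    by (rule bands(1); fact w0 w1 dist f density antimono_cdf)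
  moreover have "emeasure Q (UNIV - \<Lambda>) = 0"
    by (rule bands(2); (fact w0 w1 dist f density antimono_cdf)?)
      (use \<Lambda>_borel ps in \<open>auto simp: prob_on_def\<close>)
  ultimately have "prob_on \<Lambda> Q"
    unfolding prob_on_def by (auto simp: Q_def intro!: prob_spaceI)
  moreover have "measure Q {..a} = mu_w n w (\<lambda>i. cdf (ps i) a)" for a
    by (rule bands(3); fact w0 w1 dist f density antimono_cdf)
  then have "cdf_on \<Lambda> Q a = mu_w n w (\<lambda>i. cdf_on \<Lambda> (ps i) a)" if "prob_on \<Lambda> Q" for a
    using mu_w_cong[of n "\<lambda>i. cdf (ps i) a" "\<lambda>i. cdf_on \<Lambda> (ps i) a"]
    by (simp add: cdf_on_eq_cdf[OF that \<Lambda>_borel] cdf_on cdf_def)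
  ultimately have "wpc \<Lambda> n w ps = Q"
    by (intro wpc_eqI[OF \<Lambda>]) simp_all
  also have "Q = density lborel (\<lambda>x. ennreal (\<Sum>i\<in>{1..n}. f i x * indicator
      {x. (\<Sum>k\<in>{1..<i}. w k) \<le> cdf_on \<Lambda> (ps i) x \<and> cdf_on \<Lambda> (ps i) x < (\<Sum>k\<in>{1..i}. w k)} x))"
    unfolding Q_def by (intro arg_cong[where f = "density lborel"] ext arg_cong[where f = ennreal] sum.cong)
      (simp_all add: cdf_on)
  finally show ?thesis .
qed

theorem mainTheorem13:
  fixes \<Lambda> :: "real set" and n :: nat and w :: "nat \<Rightarrow> real"
    and ps :: "nat \<Rightarrow> real measure" and f :: "nat \<Rightarrow> real \<Rightarrow> real"
  assumes "is_interval \<Lambda>"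
    and "\<And>i. i \<in> {1..n} \<Longrightarrow> w i \<ge> 0"
    and "(\<Sum>i\<in>{1..n}. w i) = 1"
    and "\<And>i. i \<in> {1..n} \<Longrightarrow> prob_on \<Lambda> (ps i)"
    and "\<And>i. i \<in> {1..n} \<Longrightarrow> continuous_on \<Lambda> (cdf_on \<Lambda> (ps i))"
    and "\<And>i. i \<in> {1..n} \<Longrightarrow> f i \<in> borel_measurable borel"
    and "\<And>i x. i \<in> {1..n} \<Longrightarrow> f i x \<ge> 0"
    and "\<And>i. i \<in> {1..n} \<Longrightarrow> ps i = density lborel (\<lambda>x. ennreal (f i x))"
    and "\<And>i j a. i \<in> {1..n} \<Longrightarrow> j \<in> {1..n} \<Longrightarrow> i \<le> j \<Longrightarrow> a \<in> \<Lambda> \<Longrightarrow>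
           cdf_on \<Lambda> (ps i) a \<ge> cdf_on \<Lambda> (ps j) a"
  shows "wpc \<Lambda> n w ps = density lborel (\<lambda>a. ennreal
           (if \<exists>i\<in>{1..n}. (\<Sum>k\<in>{1..<i}. w k) \<le> cdf_on \<Lambda> (ps i) a
                           \<and> cdf_on \<Lambda> (ps i) a < (\<Sum>k\<in>{1..i}. w k)
            then f (THE i. i \<in> {1..n} \<and> (\<Sum>k\<in>{1..<i}. w k) \<le> cdf_on \<Lambda> (ps i) a
                           \<and> cdf_on \<Lambda> (ps i) a < (\<Sum>k\<in>{1..i}. w k)) a
            else 0))"
proof -
  have \<Lambda>: "\<Lambda> \<in> sets borel" using assms(1) by (rule real_interval_borel_measurable)
  have antimono: "cdf_on \<Lambda> (ps j) x \<le> cdf_on \<Lambda> (ps i) x" if "i \<in> {1..n}" "j \<in> {1..n}" "i \<le> j" for i j x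
    using cdf_on_le_imp_cdf_le[OF assms(1) assms(4)[OF that(2)] assms(4)[OF that(1)] assms(9)[OF that]]
    by (simp add: cdf_on_eq_cdf[OF assms(4)[OF that(1)] \<Lambda>] cdf_on_eq_cdf[OF assms(4)[OF that(2)] \<Lambda>])
  define band where
    "band i = {x. (\<Sum>k\<in>{1..<i}. w k) \<le> cdf_on \<Lambda> (ps i) x \<and> cdf_on \<Lambda> (ps i) x < (\<Sum>k\<in>{1..i}. w k)}" for i
  have wpc: "wpc \<Lambda> n w ps = density lborel (\<lambda>x. ennreal (\<Sum>i\<in>{1..n}. f i x * indicator (band i) x))"
    unfolding band_def by (rule wpc_eq_density_bands; fact assms(1-4,6-8) antimono)
  have disjoint: "i = j" if "i \<in> {1..n}" "j \<in> {1..n}" "x \<in> band i" "x \<in> band j" for i j x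
    by (rule partial_sum_bands_disjoint[of n w "\<lambda>i. cdf_on \<Lambda> (ps i) x"]; (fact assms(2) antimono)?)
      (use that in \<open>simp_all add: band_def\<close>)
  have "(\<Sum>i\<in>{1..n}. f i x * indicator (band i) x)
      = (if \<exists>i\<in>{1..n}. x \<in> band i then f (THE i. i \<in> {1..n} \<and> x \<in> band i) x else 0)" for x
    by (rule sum_indicator_eq_THE) (auto intro: disjoint)
  with wpc show ?thesis unfolding band_def mem_Collect_eq by simp
qed

end
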